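(* Let $G\rightrightarrows X$ be a locally compact groupoid whose anchor $(t,s):G\to X\times X$ is proper, whose isotropy groups are Lie groups, and whose isotropy bundle admits continuous local cross-sections through each arrow. Suppose $X$ is connected and locally connected. Let $E\to X$ be a locally trivial Banach bundle of locally finite rank and $R:s^*E\to t^*E$ a representation of $G$ on $E$. If $R$ is trivial at some $x\in X$ (i.e. $R(g)=\mathrm{id}$ for all $g\in G(x)$), then $R$ is trivial at every point of $X$.
   Context: A locally compact groupoid is a topological groupoid (source $s$, target $t$, units $1x$) with locally compact Hausdorff arrow space and a continuous left Haar system (Radon measures $\mu^x$ with support $t^{-1}(x)$, left invariant, $x\mapsto\int\varphi\,d\mu^x$ continuous for $\varphi\in C_c(G)$). $G(x)=s^{-1}(x)\cap t^{-1}(x)$. "Isotropy bundle admits continuous local cross-sections through each arrow": for every $x$ and $g\in G(x)$ there are an open $U\ni x$ and a continuous $\gamma:U\to G$ with $\gamma(u)\in G(u)$ and $\gamma(x)=g$. Banach bundle (Fell): Hausdorff space $E$ with continuous open surjection $p:E\to X$, continuous fiberwise real vector operations, continuous norm making fibers Banach spaces, nets $e_i$ with $pe_i\to x$, $|e_i|\to0$ converging to $0_x$. Locally trivial of locally finite rank: each point has an open neighborhood $U$ and an isomorphism of Banach bundles $U\times\mathbb R^n\cong E|U$ over $\mathrm{id}_U$. A representation of $G$ on $E$ is a continuous fiberwise linear map $R:s^*E\to t^*E$ over $\mathrm{id}_G$ (operators $R(g):E_{sg}\to E_{tg}$) with $R(1x)=\mathrm{id}$ and $R(gh)=R(g)R(h)$.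 *)

theory Defs
  imports "HOL-Analysis.Analysis"
begin

text \<open>Arrows have type 'g, objects type 'x; s = source, t = target, u = unit map
  (x maps to 1x), m = partial multiplication (m g h defined when s g = t h), i = inverse.\<close>

definition topological_groupoid ::
  "('g::topological_space \<Rightarrow> 'x::topological_space) \<Rightarrow> ('g \<Rightarrow> 'x) \<Rightarrow> ('x \<Rightarrow> 'g)
   \<Rightarrow> ('g \<Rightarrow> 'g \<Rightarrow> 'g) \<Rightarrow> ('g \<Rightarrow> 'g) \<Rightarrow> bool" where
  "topological_groupoid s t u m i \<longleftrightarrow>
     (\<forall>x. s (u x) = x \<and> t (u x) = x)
   \<and> (\<forall>g h. s g = t h \<longrightarrow> s (m g h) = s h \<and> t (m g h) = t g)
   \<and> (\<forall>g h k. s g = t h \<and> s h = t k \<longrightarrow> m (m g h) k = m g (m h k))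
   \<and> (\<forall>g. m (u (t g)) g = g \<and> m g (u (s g)) = g)
   \<and> (\<forall>g. s (i g) = t g \<and> t (i g) = s g \<and> m (i g) g = u (s g) \<and> m g (i g) = u (t g))
   \<and> continuous_on UNIV s \<and> continuous_on UNIV t \<and> continuous_on UNIV u
   \<and> continuous_on UNIV i
   \<and> continuous_on {(g, h). s g = t h} (\<lambda>(g, h). m g h)"

definition isotropy :: "('g \<Rightarrow> 'x) \<Rightarrow> ('g \<Rightarrow> 'x) \<Rightarrow> 'x \<Rightarrow> 'g set" where
  "isotropy s t x = {g. s g = x \<and> t g = x}"

definition radon_measure :: "'g::topological_space measure \<Rightarrow> bool" where
  "radon_measure M \<longleftrightarrow>
     sets M = sets borel
   \<and> (\<forall>K. compact K \<longrightarrow> emeasure M K < \<infinity>)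
   \<and> (\<forall>A \<in> sets borel. emeasure M A = (INF U \<in> {U. open U \<and> A \<subseteq> U}. emeasure M U))
   \<and> (\<forall>U. open U \<longrightarrow> emeasure M U = (SUP K \<in> {K. compact K \<and> K \<subseteq> U}. emeasure M K))"

definition measure_support :: "'g::topological_space measure \<Rightarrow> 'g set" where
  "measure_support M = {g. \<forall>U. open U \<and> g \<in> U \<longrightarrow> emeasure M U > 0}"

definition Cc :: "('g::topological_space \<Rightarrow> real) \<Rightarrow> bool" where
  "Cc \<phi> \<longleftrightarrow> continuous_on UNIV \<phi> \<and> compact (closure {g. \<phi> g \<noteq> 0})"

definition left_haar_system ::
  "('g::topological_space \<Rightarrow> 'x::topological_space) \<Rightarrow> ('g \<Rightarrow> 'x)
   \<Rightarrow> ('g \<Rightarrow> 'g \<Rightarrow> 'g) \<Rightarrow> ('x \<Rightarrow> 'g measure) \<Rightarrow> bool" where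
  "left_haar_system s t m \<mu> \<longleftrightarrow>
     (\<forall>x. radon_measure (\<mu> x) \<and> measure_support (\<mu> x) = {g. t g = x})
   \<and> (\<forall>\<phi>. Cc \<phi> \<longrightarrow>
        (\<forall>g. integral\<^sup>L (\<mu> (s g)) (\<lambda>h. \<phi> (m g h)) = integral\<^sup>L (\<mu> (t g)) \<phi>)
      \<and> continuous_on UNIV (\<lambda>x. integral\<^sup>L (\<mu> x) \<phi>))"

definition locally_compact_groupoid ::
  "('g::t2_space \<Rightarrow> 'x::topological_space) \<Rightarrow> ('g \<Rightarrow> 'x) \<Rightarrow> ('x \<Rightarrow> 'g)
   \<Rightarrow> ('g \<Rightarrow> 'g \<Rightarrow> 'g) \<Rightarrow> ('g \<Rightarrow> 'g) \<Rightarrow> bool" where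
  "locally_compact_groupoid s t u m i \<longleftrightarrow>
     topological_groupoid s t u m i
   \<and> locally_compact_space (euclidean :: 'g topology)
   \<and> (\<exists>\<mu>. left_haar_system s t m \<mu>)"

definition proper_anchor :: "('g::topological_space \<Rightarrow> 'x::topological_space) \<Rightarrow> ('g \<Rightarrow> 'x) \<Rightarrow> bool" where
  "proper_anchor s t \<longleftrightarrow> (\<forall>K :: ('x \<times> 'x) set. compact K \<longrightarrow> compact {g. (t g, s g) \<in> K})"

definition isotropy_local_sections ::
  "('g::topological_space \<Rightarrow> 'x::topological_space) \<Rightarrow> ('g \<Rightarrow> 'x) \<Rightarrow> bool" where
  "isotropy_local_sections s t \<longleftrightarrow>
     (\<forall>x g. g \<in> isotropy s t x \<longrightarrow>
        (\<exists>U \<gamma>. open U \<and> x \<in> U \<and> continuous_on U \<gamma>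
               \<and> (\<forall>y\<in>U. \<gamma> y \<in> isotropy s t y) \<and> \<gamma> x = g))"

text \<open>R^n is represented as the functions nat => real vanishing from index n on,
  with the (product = Euclidean) topology.\<close>
definition euclid :: "nat \<Rightarrow> (nat \<Rightarrow> real) set" where
  "euclid n = {v. \<forall>j\<ge>n. v j = 0}"

definition dquot :: "((nat \<Rightarrow> real) \<Rightarrow> real) \<Rightarrow> (nat \<Rightarrow> real) \<Rightarrow> nat \<Rightarrow> real \<Rightarrow> real" where
  "dquot f v j h = (f (v(j := v j + h)) - f v) / h"

definition partial_deriv :: "nat \<Rightarrow> ((nat \<Rightarrow> real) \<Rightarrow> real) \<Rightarrow> (nat \<Rightarrow> real) \<Rightarrow> real" where
  "partial_deriv j f v = Lim (at 0) (dquot f v j)"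

fun Ck :: "nat \<Rightarrow> nat \<Rightarrow> (nat \<Rightarrow> real) set \<Rightarrow> ((nat \<Rightarrow> real) \<Rightarrow> real) \<Rightarrow> bool" where
  "Ck n 0 U f = continuous_on U f"
| "Ck n (Suc k) U f =
     (continuous_on U f
      \<and> (\<forall>j<n. \<forall>v\<in>U. \<exists>L. (dquot f v j \<longlongrightarrow> L) (at 0))
      \<and> (\<forall>j<n. Ck n k U (partial_deriv j f)))"

definition smooth_fun :: "nat \<Rightarrow> (nat \<Rightarrow> real) set \<Rightarrow> ((nat \<Rightarrow> real) \<Rightarrow> real) \<Rightarrow> bool" where
  "smooth_fun n U f \<longleftrightarrow> (\<forall>k. Ck n k U f)"

definition smooth_map :: "nat \<Rightarrow> nat \<Rightarrow> (nat \<Rightarrow> real) set \<Rightarrow> ((nat \<Rightarrow> real) \<Rightarrow> (nat \<Rightarrow> real)) \<Rightarrow> bool" where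
  "smooth_map n m U f \<longleftrightarrow> (\<forall>j<m. smooth_fun n U (\<lambda>v. f v j))"

definition chart :: "'a::topological_space set \<Rightarrow> nat \<Rightarrow> 'a set \<Rightarrow> ('a \<Rightarrow> nat \<Rightarrow> real) \<Rightarrow> bool" where
  "chart M n W \<phi> \<longleftrightarrow>
     W \<subseteq> M \<and> openin (top_of_set M) W
   \<and> \<phi> ` W \<subseteq> euclid n \<and> openin (top_of_set (euclid n)) (\<phi> ` W)
   \<and> inj_on \<phi> W \<and> continuous_on W \<phi> \<and> continuous_on (\<phi> ` W) (the_inv_into W \<phi>)"

definition smooth_atlas :: "'a::topological_space set \<Rightarrow> nat \<Rightarrow> ('a set \<times> ('a \<Rightarrow> nat \<Rightarrow> real)) set \<Rightarrow> bool" where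
  "smooth_atlas M n A \<longleftrightarrow>
     (\<forall>(W, \<phi>) \<in> A. chart M n W \<phi>)
   \<and> M \<subseteq> \<Union> (fst ` A)
   \<and> (\<forall>(W1, \<phi>1) \<in> A. \<forall>(W2, \<phi>2) \<in> A.
        smooth_map n n (\<phi>1 ` (W1 \<inter> W2)) (\<phi>2 \<circ> the_inv_into W1 \<phi>1))"

text \<open>R^{2n} = R^n x R^n: first and second block of coordinates.\<close>
definition blk1 :: "nat \<Rightarrow> (nat \<Rightarrow> real) \<Rightarrow> (nat \<Rightarrow> real)" where
  "blk1 n w = (\<lambda>j. if j < n then w j else 0)"
definition blk2 :: "nat \<Rightarrow> (nat \<Rightarrow> real) \<Rightarrow> (nat \<Rightarrow> real)" where
  "blk2 n w = (\<lambda>j. if j < n then w (n + j) else 0)"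

definition topological_group_on :: "'a::topological_space set \<Rightarrow> ('a \<Rightarrow> 'a \<Rightarrow> 'a) \<Rightarrow> ('a \<Rightarrow> 'a) \<Rightarrow> 'a \<Rightarrow> bool" where
  "topological_group_on M mul iv e \<longleftrightarrow>
     e \<in> M \<and> (\<forall>a\<in>M. \<forall>b\<in>M. mul a b \<in> M) \<and> (\<forall>a\<in>M. iv a \<in> M)
   \<and> (\<forall>a\<in>M. \<forall>b\<in>M. \<forall>c\<in>M. mul (mul a b) c = mul a (mul b c))
   \<and> (\<forall>a\<in>M. mul e a = a \<and> mul a e = a \<and> mul (iv a) a = e \<and> mul a (iv a) = e)
   \<and> continuous_on (M \<times> M) (\<lambda>(a, b). mul a b) \<and> continuous_on M iv"

definition lie_group :: "'a::topological_space set \<Rightarrow> ('a \<Rightarrow> 'a \<Rightarrow> 'a) \<Rightarrow> ('a \<Rightarrow> 'a) \<Rightarrow> 'a \<Rightarrow> bool" where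
  "lie_group M mul iv e \<longleftrightarrow>
     topological_group_on M mul iv e
   \<and> (\<exists>n A. smooth_atlas M n A
       \<and> (\<forall>(W1, \<phi>1) \<in> A. \<forall>(W2, \<phi>2) \<in> A. \<forall>(W3, \<phi>3) \<in> A.
            smooth_map (2 * n) n
              {w \<in> euclid (2 * n). blk1 n w \<in> \<phi>1 ` W1 \<and> blk2 n w \<in> \<phi>2 ` W2
                 \<and> mul (the_inv_into W1 \<phi>1 (blk1 n w)) (the_inv_into W2 \<phi>2 (blk2 n w)) \<in> W3}
              (\<lambda>w. \<phi>3 (mul (the_inv_into W1 \<phi>1 (blk1 n w)) (the_inv_into W2 \<phi>2 (blk2 n w)))))
       \<and> (\<forall>(W1, \<phi>1) \<in> A. \<forall>(W2, \<phi>2) \<in> A.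
            smooth_map n n
              {v \<in> \<phi>1 ` W1. iv (the_inv_into W1 \<phi>1 v) \<in> W2}
              (\<lambda>v. \<phi>2 (iv (the_inv_into W1 \<phi>1 v)))))"

text \<open>Total space 'e, projection p, fiberwise addition add, scalar multiplication sm,
  zero section z, norm nrm.\<close>

definition fiber :: "('e \<Rightarrow> 'x) \<Rightarrow> 'x \<Rightarrow> 'e set" where
  "fiber p x = {e. p e = x}"

definition banach_fiber ::
  "('e \<Rightarrow> 'x) \<Rightarrow> ('e \<Rightarrow> 'e \<Rightarrow> 'e) \<Rightarrow> (real \<Rightarrow> 'e \<Rightarrow> 'e) \<Rightarrow> ('x \<Rightarrow> 'e) \<Rightarrow> ('e \<Rightarrow> real) \<Rightarrow> 'x \<Rightarrow> bool" where
  "banach_fiber p add sm z nrm x \<longleftrightarrow>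
   (let F = fiber p x in
     z x \<in> F
   \<and> (\<forall>e\<in>F. \<forall>f\<in>F. add e f \<in> F) \<and> (\<forall>a. \<forall>e\<in>F. sm a e \<in> F)
   \<and> (\<forall>e\<in>F. \<forall>f\<in>F. \<forall>g\<in>F. add (add e f) g = add e (add f g))
   \<and> (\<forall>e\<in>F. \<forall>f\<in>F. add e f = add f e)
   \<and> (\<forall>e\<in>F. add (z x) e = e \<and> add e (sm (-1) e) = z x \<and> sm 1 e = e)
   \<and> (\<forall>a b. \<forall>e\<in>F. sm (a + b) e = add (sm a e) (sm b e) \<and> sm a (sm b e) = sm (a * b) e)
   \<and> (\<forall>a. \<forall>e\<in>F. \<forall>f\<in>F. sm a (add e f) = add (sm a e) (sm a f))
   \<and> (\<forall>e\<in>F. nrm e = 0 \<longleftrightarrow> e = z x)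
   \<and> (\<forall>a. \<forall>e\<in>F. nrm (sm a e) = \<bar>a\<bar> * nrm e)
   \<and> (\<forall>e\<in>F. \<forall>f\<in>F. nrm (add e f) \<le> nrm e + nrm f)
   \<and> (\<forall>X::nat \<Rightarrow> 'e. (\<forall>k. X k \<in> F)
        \<and> (\<forall>\<epsilon>>0. \<exists>N. \<forall>k\<ge>N. \<forall>l\<ge>N. nrm (add (X k) (sm (-1) (X l))) < \<epsilon>)
        \<longrightarrow> (\<exists>L\<in>F. (\<lambda>k. nrm (add (X k) (sm (-1) L))) \<longlonglongrightarrow> 0)))"

text \<open>Fell's Banach bundle axioms; nets are expressed by filters on the total space.\<close>
definition banach_bundle ::
  "('e::t2_space \<Rightarrow> 'x::topological_space) \<Rightarrow> ('e \<Rightarrow> 'e \<Rightarrow> 'e) \<Rightarrow> (real \<Rightarrow> 'e \<Rightarrow> 'e)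
   \<Rightarrow> ('x \<Rightarrow> 'e) \<Rightarrow> ('e \<Rightarrow> real) \<Rightarrow> bool" where
  "banach_bundle p add sm z nrm \<longleftrightarrow>
     continuous_on UNIV p \<and> (\<forall>U. open U \<longrightarrow> open (p ` U)) \<and> surj p
   \<and> continuous_on {(e, f). p e = p f} (\<lambda>(e, f). add e f)
   \<and> continuous_on UNIV (\<lambda>(a, e). sm a e)
   \<and> continuous_on UNIV nrm
   \<and> (\<forall>x. banach_fiber p add sm z nrm x)
   \<and> (\<forall>(F :: 'e filter) x. (p \<longlongrightarrow> x) F \<and> (nrm \<longlongrightarrow> 0) F \<longrightarrow> ((\<lambda>e. e) \<longlongrightarrow> z x) F)"

definition locally_trivial_finite_rank ::
  "('e::topological_space \<Rightarrow> 'x::topological_space) \<Rightarrow> ('e \<Rightarrow> 'e \<Rightarrow> 'e) \<Rightarrow> (real \<Rightarrow> 'e \<Rightarrow> 'e) \<Rightarrow> bool" where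
  "locally_trivial_finite_rank p add sm \<longleftrightarrow>
     (\<forall>x. \<exists>U n h h'. open U \<and> x \<in> U
        \<and> homeomorphism (U \<times> euclid n) (p -` U) h h'
        \<and> (\<forall>y\<in>U. \<forall>v\<in>euclid n. p (h (y, v)) = y)
        \<and> (\<forall>y\<in>U. \<forall>v\<in>euclid n. \<forall>w\<in>euclid n. \<forall>a b.
             h (y, \<lambda>j. a * v j + b * w j) = add (sm a (h (y, v))) (sm b (h (y, w)))))"

definition groupoid_representation ::
  "('g::topological_space \<Rightarrow> 'x) \<Rightarrow> ('g \<Rightarrow> 'x) \<Rightarrow> ('x \<Rightarrow> 'g) \<Rightarrow> ('g \<Rightarrow> 'g \<Rightarrow> 'g)
   \<Rightarrow> ('e::topological_space \<Rightarrow> 'x) \<Rightarrow> ('e \<Rightarrow> 'e \<Rightarrow> 'e) \<Rightarrow> (real \<Rightarrow> 'e \<Rightarrow> 'e)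
   \<Rightarrow> ('g \<Rightarrow> 'e \<Rightarrow> 'e) \<Rightarrow> bool" where
  "groupoid_representation s t u m p add sm R \<longleftrightarrow>
     (\<forall>g e. p e = s g \<longrightarrow> p (R g e) = t g)
   \<and> continuous_on {(g, e). s g = p e} (\<lambda>(g, e). (g, R g e))
   \<and> (\<forall>g. \<forall>e\<in>fiber p (s g). \<forall>f\<in>fiber p (s g). R g (add e f) = add (R g e) (R g f))
   \<and> (\<forall>g a. \<forall>e\<in>fiber p (s g). R g (sm a e) = sm a (R g e))
   \<and> (\<forall>x. \<forall>e\<in>fiber p x. R (u x) e = e)
   \<and> (\<forall>g h. s g = t h \<longrightarrow> (\<forall>e\<in>fiber p (s h). R (m g h) e = R g (R h e)))"

definition rep_trivial_at ::
  "('g \<Rightarrow> 'x) \<Rightarrow> ('g \<Rightarrow> 'x) \<Rightarrow> ('e \<Rightarrow> 'x) \<Rightarrow> ('g \<Rightarrow> 'e \<Rightarrow> 'e) \<Rightarrow> 'x \<Rightarrow> bool" where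
  "rep_trivial_at s t p R x \<longleftrightarrow> (\<forall>g\<in>isotropy s t x. \<forall>e\<in>fiber p x. R g e = e)"

end

theory Submission
  imports Defs
begin

text \<open>The set of points at which \<open>R\<close> is trivial is closed and open. Closed: through a local
  section \<open>\<gamma>\<close> of the isotropy bundle and a local frame \<open>h(y, v)\<close> of \<open>E\<close>, the condition
  \<open>R(\<gamma> y) h(y, v) = h(y, v)\<close> is an equation between continuous maps into a Hausdorff space.
  Open: in a local trivialisation \<open>R(g)\<close> becomes a matrix depending continuously on \<open>g\<close>, so the
  arrows whose matrix is within \<open>1/2\<close> of the identity form an open set \<open>N\<close> containing the
  isotropy group at a trivial point \<open>x\<close>. Properness of the anchor makes the isotropy groups
  upper semicontinuous, so nearby isotropy groups also lie in \<open>N\<close>; but a group of matrices all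
  within \<open>1/2\<close> of the identity is trivial (\<open>GL\<^sub>n\<close> has no small subgroups). Connectedness of
  \<open>X\<close> concludes.\<close>

section \<open>Matrices near the identity\<close>

definition unit_vec :: "nat \<Rightarrow> nat \<Rightarrow> real" where
  "unit_vec j = (\<lambda>i. if i = j then 1 else 0)"

definition l1_norm :: "nat \<Rightarrow> (nat \<Rightarrow> real) \<Rightarrow> real" where
  "l1_norm n v = (\<Sum>i<n. \<bar>v i\<bar>)"

definition euclid_linear :: "nat \<Rightarrow> ((nat \<Rightarrow> real) \<Rightarrow> (nat \<Rightarrow> real)) \<Rightarrow> bool" where
  "euclid_linear n A \<longleftrightarrow> (\<forall>v\<in>euclid n. A v \<in> euclid n) \<and>
     (\<forall>v\<in>euclid n. \<forall>w\<in>euclid n. \<forall>a b. A (\<lambda>j. a * v j + b * w j) = (\<lambda>j. a * A v j + b * A w j))"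

definition deviation_from_id :: "nat \<Rightarrow> ((nat \<Rightarrow> real) \<Rightarrow> (nat \<Rightarrow> real)) \<Rightarrow> real" where
  "deviation_from_id n A = (\<Sum>j<n. l1_norm n (\<lambda>i. A (unit_vec j) i - unit_vec j i))"

lemma euclid_lincomb: "v \<in> euclid n \<Longrightarrow> w \<in> euclid n \<Longrightarrow> (\<lambda>j. a * v j + b * w j) \<in> euclid n"
  by (simp add: euclid_def)

lemma unit_vec_in_euclid: "j < n \<Longrightarrow> unit_vec j \<in> euclid n"
  by (simp add: euclid_def unit_vec_def)

lemma l1_norm_nonneg: "0 \<le> l1_norm n v"
  by (simp add: l1_norm_def sum_nonneg)

lemma euclid_linearD:
  "euclid_linear n A \<Longrightarrow> v \<in> euclid n \<Longrightarrow> A v \<in> euclid n"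
  "euclid_linear n A \<Longrightarrow> v \<in> euclid n \<Longrightarrow> w \<in> euclid n \<Longrightarrow>
     A (\<lambda>j. a * v j + b * w j) = (\<lambda>j. a * A v j + b * A w j)"
  unfolding euclid_linear_def by blast+

lemma euclid_linear_funpow: "euclid_linear n A \<Longrightarrow> euclid_linear n (A ^^ k)"
  by (induction k) (simp_all add: euclid_linear_def)

lemma euclid_linear_expansion:
  assumes A: "euclid_linear n A" and v: "v \<in> euclid n"
  shows "A v i = (\<Sum>j<n. v j * A (unit_vec j) i)"
proof -
  have "A (\<lambda>i. if i < k then v i else 0) i = (\<Sum>j<k. v j * A (unit_vec j) i)" if "k \<le> n" for k
    using that
  proof (induction k)
    case 0
    have "(\<lambda>i. 0::real) \<in> euclid n" by (simp add: euclid_def)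
    from euclid_linearD(2)[OF A this this, of 0 0] show ?case by simp
  next
    case (Suc k)
    define v' where "v' = (\<lambda>i. if i < k then v i else (0::real))"
    have v': "v' \<in> euclid n" using v Suc.prems by (auto simp: v'_def euclid_def)
    have split: "(\<lambda>i. if i < Suc k then v i else 0) = (\<lambda>i. v' i + v k * unit_vec k i)"
      by (auto simp: v'_def unit_vec_def fun_eq_iff less_Suc_eq)
    have "k < n" using Suc.prems by simp
    from euclid_linearD(2)[OF A v' unit_vec_in_euclid[OF this], of 1 "v k"]
    have "A (\<lambda>i. v' i + v k * unit_vec k i) = (\<lambda>i. A v' i + v k * A (unit_vec k) i)" by simp
    then show ?case using Suc by (simp add: split v'_def[symmetric])
  qed
  moreover have "(\<lambda>i. if i < n then v i else 0) = v" using v by (auto simp: euclid_def)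
  ultimately show ?thesis by (metis order_refl)
qed

lemma l1_norm_deviation_le:
  assumes A: "euclid_linear n A" and v: "v \<in> euclid n"
  shows "l1_norm n (\<lambda>i. A v i - v i) \<le> deviation_from_id n A * l1_norm n v"
proof -
  let ?c = "\<lambda>j. l1_norm n (\<lambda>i. A (unit_vec j) i - unit_vec j i)"
  have "v i = (\<Sum>j<n. v j * unit_vec j i)" if "i < n" for i
    using that by (simp add: unit_vec_def if_distrib cong: if_cong)
  then have col: "A v i - v i = (\<Sum>j<n. v j * (A (unit_vec j) i - unit_vec j i))" if "i < n" for i
    using euclid_linear_expansion[OF A v, of i] that by (simp add: sum_subtractf right_diff_distrib)
  have "l1_norm n (\<lambda>i. A v i - v i) \<le> (\<Sum>i<n. \<Sum>j<n. \<bar>v j\<bar> * \<bar>A (unit_vec j) i - unit_vec j i\<bar>)"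
    unfolding l1_norm_def using col
    by (intro sum_mono) (simp add: order_trans[OF sum_abs] abs_mult)
  also have "\<dots> = (\<Sum>j<n. \<bar>v j\<bar> * ?c j)"
    by (subst sum.swap) (simp add: l1_norm_def sum_distrib_left)
  also have "\<dots> \<le> (\<Sum>j<n. \<bar>v j\<bar> * deviation_from_id n A)"
    unfolding deviation_from_id_def
    by (intro sum_mono mult_left_mono member_le_sum) (auto simp: l1_norm_nonneg)
  also have "\<dots> = deviation_from_id n A * l1_norm n v"
    by (simp add: l1_norm_def sum_distrib_left mult.commute)
  finally show ?thesis .
qed

lemma euclid_eq_if_l1_norm_diff_eq_0:
  assumes "v \<in> euclid n" "w \<in> euclid n" "l1_norm n (\<lambda>i. v i - w i) = 0"
  shows "v = w"
proof -
  have "v i = w i" if "i < n" for i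
    using assms(3) that unfolding l1_norm_def by (simp add: sum_nonneg_eq_0_iff)
  moreover have "v i = w i" if "n \<le> i" for i using assms(1,2) that by (simp add: euclid_def)
  ultimately show ?thesis by (meson ext not_le)
qed

text \<open>If \<open>w = A v - v \<noteq> 0\<close>, the telescoping sum \<open>\<Sum>k<N. A\<^sup>k w = A\<^sup>N v - v\<close> has norm
  at least \<open>N\<parallel>w\<parallel> - N\<parallel>w\<parallel>/2\<close> and at most \<open>\<parallel>v\<parallel>/2\<close>, which fails for large \<open>N\<close>.\<close>

lemma euclid_linear_eq_id_if_powers_near_id:
  assumes A: "euclid_linear n A"
    and near: "\<And>k. deviation_from_id n (A ^^ k) \<le> 1/2"
    and v: "v \<in> euclid n"
  shows "A v = v"
proof -
  have Ak: "euclid_linear n (A ^^ k)" for k by (rule euclid_linear_funpow[OF A])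
  have contract: "l1_norm n (\<lambda>i. (A ^^ k) x i - x i) \<le> 1/2 * l1_norm n x" if "x \<in> euclid n" for k x
    using l1_norm_deviation_le[OF Ak that, of k] near[of k] l1_norm_nonneg[of n x]
    by (smt (verit) mult_right_mono)
  have Av: "A v \<in> euclid n" using euclid_linearD(1)[OF A v] .
  define w where "w = (\<lambda>i. A v i - v i)"
  have w: "w \<in> euclid n" using Av v by (simp add: w_def euclid_def)
  have "(A ^^ k) w i = (A ^^ Suc k) v i - (A ^^ k) v i" for k i
    using euclid_linearD(2)[OF Ak Av v, of k 1 "-1"]
    by (simp add: w_def funpow_Suc_right del: funpow.simps)
  then have telescope: "(\<Sum>k<N. (A ^^ k) w i) = (A ^^ N) v i - v i" for N i
    using sum_lessThan_telescope[of "\<lambda>k. (A ^^ k) v i" N] by (simp del: funpow.simps)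
  have bound: "real N * l1_norm n w \<le> 1/2 * l1_norm n v + real N * (1/2 * l1_norm n w)" for N
  proof -
    have "real N * l1_norm n w
        = (\<Sum>i<n. \<bar>(\<Sum>k<N. (A ^^ k) w i) - (\<Sum>k<N. (A ^^ k) w i - w i)\<bar>)"
      by (simp add: l1_norm_def sum_distrib_left sum_subtractf abs_mult)
    also have "\<dots> \<le> (\<Sum>i<n. \<bar>(A ^^ N) v i - v i\<bar> + (\<Sum>k<N. \<bar>(A ^^ k) w i - w i\<bar>))"
      unfolding telescope by (intro sum_mono order_trans[OF abs_triangle_ineq4] add_left_mono sum_abs)
    also have "\<dots> = l1_norm n (\<lambda>i. (A ^^ N) v i - v i) + (\<Sum>k<N. l1_norm n (\<lambda>i. (A ^^ k) w i - w i))"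
      by (simp add: l1_norm_def sum.distrib sum.swap[of _ "{..<N}"])
    also have "\<dots> \<le> 1/2 * l1_norm n v + (\<Sum>k<N. 1/2 * l1_norm n w)"
      by (intro add_mono contract sum_mono v w)
    finally show ?thesis by simp
  qed
  have "l1_norm n w = 0"
  proof (rule ccontr)
    assume "l1_norm n w \<noteq> 0"
    then have pos: "l1_norm n w > 0" using l1_norm_nonneg[of n w] by simp
    obtain N where "l1_norm n v / l1_norm n w < real N" using reals_Archimedean2 by blast
    then have "l1_norm n v < real N * l1_norm n w" using pos by (simp add: field_simps)
    then show False using bound[of N] by simp
  qed
  then show ?thesis using euclid_eq_if_l1_norm_diff_eq_0[OF Av v] by (simp add: w_def)
qed

section \<open>Topological groupoids\<close>

lemma topological_groupoidD:
  assumes "topological_groupoid s t u m i"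
  shows "s (u x) = x" "t (u x) = x"
    "s g = t h \<Longrightarrow> s (m g h) = s h" "s g = t h \<Longrightarrow> t (m g h) = t g"
    "continuous_on UNIV s" "continuous_on UNIV t" "continuous_on UNIV u"
  using assms unfolding topological_groupoid_def by simp_all

lemma isotropy_unit:
  "topological_groupoid s t u m i \<Longrightarrow> u y \<in> isotropy s t y"
  by (simp add: isotropy_def topological_groupoidD)

lemma isotropy_mult:
  "topological_groupoid s t u m i \<Longrightarrow> g \<in> isotropy s t y \<Longrightarrow> g' \<in> isotropy s t y \<Longrightarrow>
     m g g' \<in> isotropy s t y"
  by (simp add: isotropy_def topological_groupoidD)

lemma isotropy_funpow_mult:
  "topological_groupoid s t u m i \<Longrightarrow> g \<in> isotropy s t y \<Longrightarrow> (m g ^^ k) (u y) \<in> isotropy s t y"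
  by (induction k) (simp_all add: isotropy_unit isotropy_mult)

text \<open>The unit map embeds \<open>X\<close> into the Hausdorff space of arrows, with left inverse \<open>s\<close>.\<close>

lemma groupoid_compact_objects_closed:
  fixes s t :: "'g::t2_space \<Rightarrow> 'x::topological_space"
    and K :: "'x set"
  assumes TG: "topological_groupoid s t u m i" and K: "compact K"
  shows "closed K"
proof -
  note tg = topological_groupoidD[OF TG]
  have "closed (u ` K)"
    by (intro compact_imp_closed compact_continuous_image continuous_on_subset[OF tg(7)] K) simp
  then have "closed (u -` (u ` K))" by (rule closed_vimage[OF _ tg(7)])
  moreover have "u -` (u ` K) = K" using tg(1) by (metis inj_on_inverseI inj_vimage_image_eq)
  ultimately show ?thesis by simp
qed

lemma groupoid_loops_closed:
  fixes s t :: "'g::t2_space \<Rightarrow> 'x::topological_space"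
  assumes TG: "topological_groupoid s t u m i"
  shows "closed {g. s g = t g}"
proof -
  note tg = topological_groupoidD[OF TG]
  have "{g. s g = t g} = {g. u (s g) = u (t g)}" using tg(1) by metis
  moreover have "closed {g. u (s g) = u (t g)}"
    by (intro closed_Collect_eq continuous_on_compose2[OF tg(7)] tg(5,6)) simp_all
  ultimately show ?thesis by simp
qed

text \<open>Over a compact neighbourhood \<open>C\<close> of \<open>x\<close>,
  the loops outside \<open>N\<close> form a compact set by properness; its image under \<open>s\<close> is compact,
  hence closed, and misses \<open>x\<close>.\<close>

lemma proper_groupoid_isotropy_nhd:
  fixes s t :: "'g::t2_space \<Rightarrow> 'x::topological_space"
  assumes TG: "topological_groupoid s t u m i" and PA: "proper_anchor s t"
    and LC: "locally_compact_space (euclidean :: 'g topology)"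
    and N: "open N" "isotropy s t x \<subseteq> N"
  obtains T where "open T" "x \<in> T" "\<And>y. y \<in> T \<Longrightarrow> isotropy s t y \<subseteq> N"
proof -
  note tg = topological_groupoidD[OF TG]
  obtain U K where UK: "open U" "compact K" "u x \<in> U" "U \<subseteq> K"
    using LC unfolding locally_compact_space_def by (metis UNIV_I compactin_euclidean_iff
      open_openin topspace_euclidean)
  define C where "C = s ` K"
  have C: "compact C"
    unfolding C_def by (rule compact_continuous_image[OF continuous_on_subset[OF tg(5)] UK(2)]) simp
  have UC: "u -` U \<subseteq> C"
    using UK(4) tg(1) unfolding C_def by (metis image_eqI subset_iff vimageE)
  define B where "B = {g. (t g, s g) \<in> C \<times> C} \<inter> {g. s g = t g} \<inter> - N"
  have "compact {g. (t g, s g) \<in> C \<times> C}"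
    using PA compact_Times[OF C C] unfolding proper_anchor_def by blast
  then have "compact B"
    unfolding B_def using N(1) groupoid_loops_closed[OF TG] by (intro compact_Int_closed closed_Compl)
  then have "closed (s ` B)"
    by (intro groupoid_compact_objects_closed[OF TG] compact_continuous_image
        continuous_on_subset[OF tg(5)]) simp
  moreover have "x \<notin> s ` B" using N(2) by (auto simp: B_def isotropy_def)
  moreover have "isotropy s t y \<subseteq> N" if "y \<in> u -` U - s ` B" for y
    using that UC by (force simp: B_def isotropy_def)
  ultimately show ?thesis
    using UK(1,3) by (intro that[of "u -` U - s ` B"] open_Diff open_vimage[OF UK(1) tg(7)]) auto
qed

section \<open>Representations in a local trivialisation\<close>

lemma groupoid_representationD:
  assumes "groupoid_representation s t u m p add sm R"
  shows "p e = s g \<Longrightarrow> p (R g e) = t g"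
    "continuous_on {(g, e). s g = p e} (\<lambda>(g, e). (g, R g e))"
    "p e = s g \<Longrightarrow> p f = s g \<Longrightarrow> R g (add e f) = add (R g e) (R g f)"
    "p e = s g \<Longrightarrow> R g (sm a e) = sm a (R g e)"
    "p e = x \<Longrightarrow> R (u x) e = e"
    "s g = t h \<Longrightarrow> p e = s h \<Longrightarrow> R (m g h) e = R g (R h e)"
  using assms unfolding groupoid_representation_def fiber_def by auto

lemma banach_bundle_scale_fiber:
  assumes "banach_bundle p add sm z nrm"
  shows "p (sm a e) = p e"
proof -
  have "banach_fiber p add sm z nrm (p e)" using assms unfolding banach_bundle_def by blast
  then have "\<forall>a. \<forall>f\<in>fiber p (p e). sm a f \<in> fiber p (p e)"
    unfolding banach_fiber_def Let_def by (elim conjE)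
  then show ?thesis by (simp add: fiber_def)
qed

lemma continuous_on_rep_apply:
  assumes R: "continuous_on {(g, e). s g = p e} (\<lambda>(g, e). (g, R g e))"
    and a: "continuous_on S a" and b: "continuous_on S b" and ab: "\<And>x. x \<in> S \<Longrightarrow> s (a x) = p (b x)"
  shows "continuous_on S (\<lambda>x. R (a x) (b x))"
proof -
  have "continuous_on S (\<lambda>x. (\<lambda>(g, e). (g, R g e)) (a x, b x))"
    using ab by (intro continuous_on_compose2[OF R] continuous_on_Pair a b) auto
  then have "continuous_on S (\<lambda>x. snd ((\<lambda>(g, e). (g, R g e)) (a x, b x)))"
    by (rule continuous_on_snd)
  then show ?thesis by simp
qed

lemma Hausdorff_space_euclidean_t2: "Hausdorff_space (euclidean :: 'a::t2_space topology)"
  unfolding Hausdorff_space_def disjnt_def by (metis hausdorff open_openin)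

lemma continuous_eq_on_closure:
  fixes f g :: "'a::topological_space \<Rightarrow> 'b::t2_space"
  assumes "open U" "continuous_on U f" "continuous_on U g"
    and "\<And>y. y \<in> A \<Longrightarrow> y \<in> U \<Longrightarrow> f y = g y" and "x \<in> U" "x \<in> closure A"
  shows "f x = g x"
proof (rule forall_in_closure_of_eq[where X = "top_of_set U" and Y = euclidean and S = "A \<inter> U"])
  show "x \<in> top_of_set U closure_of (A \<inter> U)"
    using assms(1,5,6) open_Int_closure_subset[of U A]
    by (subst closure_of_subtopology_open) (auto simp: Int_commute)
qed (use assms Hausdorff_space_euclidean_t2 in auto)

text \<open>For a loop \<open>g\<close> at \<open>y \<in> V\<close>, \<open>rep_matrix g\<close> is the matrix of \<open>R(g)\<close> in the frame \<open>h(y, -)\<close>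
  of the trivialisation \<open>V \<times> \<real>\<^sup>n \<cong> E|V\<close>; for other arrows it is meaningless.\<close>

locale rep_trivialization =
  fixes s t :: "'g::t2_space \<Rightarrow> 'x::topological_space" and u :: "'x \<Rightarrow> 'g"
    and m :: "'g \<Rightarrow> 'g \<Rightarrow> 'g" and i :: "'g \<Rightarrow> 'g"
    and p :: "'e::t2_space \<Rightarrow> 'x" and add :: "'e \<Rightarrow> 'e \<Rightarrow> 'e" and sm :: "real \<Rightarrow> 'e \<Rightarrow> 'e"
    and R :: "'g \<Rightarrow> 'e \<Rightarrow> 'e" and V :: "'x set" and n :: nat
    and h :: "'x \<times> (nat \<Rightarrow> real) \<Rightarrow> 'e" and h' :: "'e \<Rightarrow> 'x \<times> (nat \<Rightarrow> real)"
  assumes groupoid: "topological_groupoid s t u m i"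
    and representation: "groupoid_representation s t u m p add sm R"
    and scale_fiber: "\<And>a e. p (sm a e) = p e"
    and open_V: "open V"
    and homeo: "homeomorphism (V \<times> euclid n) (p -` V) h h'"
    and over_V: "\<And>y v. y \<in> V \<Longrightarrow> v \<in> euclid n \<Longrightarrow> p (h (y, v)) = y"
    and fiber_linear: "\<And>y v w a b. y \<in> V \<Longrightarrow> v \<in> euclid n \<Longrightarrow> w \<in> euclid n \<Longrightarrow>
             h (y, \<lambda>j. a * v j + b * w j) = add (sm a (h (y, v))) (sm b (h (y, w)))"
begin

definition rep_matrix :: "'g \<Rightarrow> (nat \<Rightarrow> real) \<Rightarrow> (nat \<Rightarrow> real)" where
  "rep_matrix g v = snd (h' (R g (h (s g, v))))"

lemma chart_inverse: "y \<in> V \<Longrightarrow> v \<in> euclid n \<Longrightarrow> h' (h (y, v)) = (y, v)"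
  using homeomorphism_apply1[OF homeo] by simp

lemma chart_coordinates:
  assumes "p e \<in> V"
  shows "e = h (p e, snd (h' e))" "snd (h' e) \<in> euclid n"
proof -
  have e: "e \<in> p -` V" using assms by simp
  then obtain y v where yv: "h' e = (y, v)" "y \<in> V" "v \<in> euclid n"
    using homeomorphism_image2[OF homeo] by blast
  moreover have "h (y, v) = e" using homeomorphism_apply2[OF homeo e] yv(1) by simp
  ultimately show "e = h (p e, snd (h' e))" "snd (h' e) \<in> euclid n" using over_V by auto
qed

lemma rep_matrix_transport:
  assumes g: "g \<in> isotropy s t y" and y: "y \<in> V" and v: "v \<in> euclid n"
  shows "R g (h (y, v)) = h (y, rep_matrix g v)" "rep_matrix g v \<in> euclid n"
proof -
  have "p (R g (h (y, v))) = y"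
    using groupoid_representationD(1)[OF representation] over_V[OF y v] g by (simp add: isotropy_def)
  moreover have "rep_matrix g v = snd (h' (R g (h (y, v))))"
    using g by (simp add: rep_matrix_def isotropy_def)
  ultimately show "R g (h (y, v)) = h (y, rep_matrix g v)" "rep_matrix g v \<in> euclid n"
    using chart_coordinates y by metis+
qed

lemma rep_matrix_eqI:
  assumes "g \<in> isotropy s t y" "y \<in> V" "w \<in> euclid n" "R g (h (y, v)) = h (y, w)"
  shows "rep_matrix g v = w"
  using assms chart_inverse by (simp add: rep_matrix_def isotropy_def)

lemma rep_matrix_linear:
  assumes g: "g \<in> isotropy s t y" and y: "y \<in> V"
  shows "euclid_linear n (rep_matrix g)"
  unfolding euclid_linear_def
proof (intro conjI ballI allI)
  fix v assume "v \<in> euclid n"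
  then show "rep_matrix g v \<in> euclid n" using rep_matrix_transport[OF g y] by simp
next
  fix v w a b assume v: "v \<in> euclid n" and w: "w \<in> euclid n"
  note rep = groupoid_representationD[OF representation]
  have fib: "p (h (y, v)) = s g" "p (h (y, w)) = s g"
    using over_V[OF y v] over_V[OF y w] g by (auto simp: isotropy_def)
  have Av: "rep_matrix g v \<in> euclid n" and Aw: "rep_matrix g w \<in> euclid n"
    using rep_matrix_transport[OF g y] v w by auto
  have "R g (h (y, \<lambda>j. a * v j + b * w j)) = R g (add (sm a (h (y, v))) (sm b (h (y, w))))"
    using fiber_linear[OF y v w] by simp
  also have "\<dots> = add (sm a (R g (h (y, v)))) (sm b (R g (h (y, w))))"
    using rep(3,4) fib scale_fiber by simp
  also have "\<dots> = h (y, \<lambda>j. a * rep_matrix g v j + b * rep_matrix g w j)"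
    using rep_matrix_transport[OF g y] v w fiber_linear[OF y Av Aw] by simp
  finally show "rep_matrix g (\<lambda>j. a * v j + b * w j) = (\<lambda>j. a * rep_matrix g v j + b * rep_matrix g w j)"
    by (rule rep_matrix_eqI[OF g y euclid_lincomb[OF Av Aw]])
qed

lemma rep_matrix_unit:
  assumes y: "y \<in> V" and v: "v \<in> euclid n"
  shows "rep_matrix (u y) v = v"
  using groupoid_representationD(5)[OF representation over_V[OF y v]]
    topological_groupoidD(1)[OF groupoid] chart_inverse[OF y v]
  by (simp add: rep_matrix_def)

lemma rep_matrix_mult:
  assumes g: "g \<in> isotropy s t y" and g': "g' \<in> isotropy s t y" and y: "y \<in> V" and v: "v \<in> euclid n"
  shows "rep_matrix (m g g') v = rep_matrix g (rep_matrix g' v)"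
proof -
  have gg': "m g g' \<in> isotropy s t y" by (rule isotropy_mult[OF groupoid g g'])
  have A'v: "rep_matrix g' v \<in> euclid n" using rep_matrix_transport[OF g' y v] by simp
  have "R (m g g') (h (y, v)) = R g (R g' (h (y, v)))"
    using groupoid_representationD(6)[OF representation] g g' over_V[OF y v]
    by (simp add: isotropy_def)
  also have "\<dots> = h (y, rep_matrix g (rep_matrix g' v))"
    using rep_matrix_transport[OF g' y v] rep_matrix_transport[OF g y A'v] by simp
  finally show ?thesis
    by (rule rep_matrix_eqI[OF gg' y rep_matrix_transport(2)[OF g y A'v]])
qed

lemma rep_matrix_funpow:
  assumes g: "g \<in> isotropy s t y" and y: "y \<in> V" and v: "v \<in> euclid n"
  shows "rep_matrix ((m g ^^ k) (u y)) v = (rep_matrix g ^^ k) v"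
proof (induction k)
  case 0
  show ?case using rep_matrix_unit[OF y v] by simp
next
  case (Suc k)
  then show ?case
    using rep_matrix_mult[OF g isotropy_funpow_mult[OF groupoid g] y v] by simp
qed

lemma continuous_on_deviation_rep_matrix:
  "continuous_on (s -` V \<inter> t -` V) (\<lambda>g. deviation_from_id n (rep_matrix g))"
  unfolding deviation_from_id_def l1_norm_def
proof (intro continuous_on_sum continuous_on_rabs continuous_on_diff continuous_on_const)
  fix j k assume "j \<in> {..<n}"
  then have e: "unit_vec j \<in> euclid n" by (simp add: unit_vec_in_euclid)
  let ?D = "s -` V \<inter> t -` V"
  note tg = topological_groupoidD[OF groupoid] and rep = groupoid_representationD[OF representation]
  have "continuous_on ?D (\<lambda>g. h (s g, unit_vec j))"
    using e by (intro continuous_on_compose2[OF homeomorphism_cont1[OF homeo]] continuous_intros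
        continuous_on_subset[OF tg(5)]) auto
  then have "continuous_on ?D (\<lambda>g. R g (h (s g, unit_vec j)))"
    by (rule continuous_on_rep_apply[OF rep(2) continuous_on_id]) (simp add: over_V e)
  then have "continuous_on ?D (\<lambda>g. h' (R g (h (s g, unit_vec j))))"
    using rep(1) over_V e
    by (intro continuous_on_compose2[OF homeomorphism_cont2[OF homeo]]) auto
  then have "continuous_on ?D (\<lambda>g. rep_matrix g (unit_vec j))"
    unfolding rep_matrix_def by (rule continuous_on_snd)
  then show "continuous_on ?D (\<lambda>g. rep_matrix g (unit_vec j) k)"
    by (rule continuous_on_product_then_coordinatewise)
qed

lemma trivial_at_closure_point:
  assumes x: "x \<in> V" and sections: "isotropy_local_sections s t"
    and closure: "x \<in> closure {y. rep_trivial_at s t p R y}"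
  shows "rep_trivial_at s t p R x"
  unfolding rep_trivial_at_def
proof (intro ballI)
  fix g e assume g: "g \<in> isotropy s t x" and e: "e \<in> fiber p x"
  obtain U \<gamma> where U: "open U" "x \<in> U" "continuous_on U \<gamma>" "\<And>y. y \<in> U \<Longrightarrow> \<gamma> y \<in> isotropy s t y"
    "\<gamma> x = g"
    using sections g unfolding isotropy_local_sections_def by metis
  define v where "v = snd (h' e)"
  have ev: "e = h (x, v)" "v \<in> euclid n" using chart_coordinates e x by (auto simp: v_def fiber_def)
  have ch: "continuous_on (U \<inter> V) (\<lambda>y. h (y, v))"
    using ev(2) by (intro continuous_on_compose2[OF homeomorphism_cont1[OF homeo]] continuous_intros) auto
  have "R (\<gamma> x) (h (x, v)) = h (x, v)"
  proof (rule continuous_eq_on_closure[OF _ _ ch _ _ closure])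
    show "continuous_on (U \<inter> V) (\<lambda>y. R (\<gamma> y) (h (y, v)))"
      using U(4) over_V ev(2)
      by (intro continuous_on_rep_apply[OF groupoid_representationD(2)[OF representation] _ ch]
          continuous_on_subset[OF U(3)]) (auto simp: isotropy_def)
    show "\<And>y. y \<in> {y. rep_trivial_at s t p R y} \<Longrightarrow> y \<in> U \<inter> V \<Longrightarrow> R (\<gamma> y) (h (y, v)) = h (y, v)"
      using U(4) over_V ev(2) by (auto simp: rep_trivial_at_def fiber_def)
  qed (use U open_V x in auto)
  then show "R g e = e" using U(5) ev(1) by simp
qed

lemma trivial_at_if_isotropy_near_id:
  assumes y: "y \<in> V"
    and near: "\<And>g. g \<in> isotropy s t y \<Longrightarrow> deviation_from_id n (rep_matrix g) < 1/2"
  shows "rep_trivial_at s t p R y"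
  unfolding rep_trivial_at_def
proof (intro ballI)
  fix g e assume g: "g \<in> isotropy s t y" and e: "e \<in> fiber p y"
  have "deviation_from_id n (rep_matrix g ^^ k) \<le> 1/2" for k
  proof -
    have "deviation_from_id n (rep_matrix g ^^ k) = deviation_from_id n (rep_matrix ((m g ^^ k) (u y)))"
      using rep_matrix_funpow[OF g y unit_vec_in_euclid] by (simp add: deviation_from_id_def)
    then show ?thesis using near[OF isotropy_funpow_mult[OF groupoid g, where k = k]] by simp
  qed
  then have id: "rep_matrix g v = v" if "v \<in> euclid n" for v
    by (rule euclid_linear_eq_id_if_powers_near_id[OF rep_matrix_linear[OF g y] _ that])
  have "e = h (y, snd (h' e))" "snd (h' e) \<in> euclid n" using chart_coordinates e y by (auto simp: fiber_def)
  then show "R g e = e" using rep_matrix_transport[OF g y] id by metis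
qed

lemma trivial_on_nhd:
  assumes x: "x \<in> V" and trivial: "rep_trivial_at s t p R x" and PA: "proper_anchor s t"
    and LC: "locally_compact_space (euclidean :: 'g topology)"
  obtains T where "open T" "x \<in> T" "\<And>y. y \<in> T \<Longrightarrow> rep_trivial_at s t p R y"
proof -
  note tg = topological_groupoidD[OF groupoid]
  define N where "N = (s -` V \<inter> t -` V) \<inter> (\<lambda>g. deviation_from_id n (rep_matrix g)) -` {..<1/2}"
  have "open N"
    unfolding N_def using open_V tg(5,6)
    by (intro continuous_open_preimage[OF continuous_on_deviation_rep_matrix] open_Int open_vimage) auto
  moreover have "isotropy s t x \<subseteq> N"
  proof
    fix g assume g: "g \<in> isotropy s t x"
    have "rep_matrix g (unit_vec j) = unit_vec j" if "j < n" for j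
      using trivial g over_V[OF x unit_vec_in_euclid[OF that]]
      by (intro rep_matrix_eqI[OF g x unit_vec_in_euclid[OF that]]) (simp add: rep_trivial_at_def fiber_def)
    then show "g \<in> N" using g x by (simp add: N_def deviation_from_id_def l1_norm_def isotropy_def)
  qed
  ultimately obtain T where T: "open T" "x \<in> T" "\<And>y. y \<in> T \<Longrightarrow> isotropy s t y \<subseteq> N"
    using proper_groupoid_isotropy_nhd[OF groupoid PA LC] by metis
  show ?thesis
  proof (rule that[of "T \<inter> V"])
    fix y assume y: "y \<in> T \<inter> V"
    have "deviation_from_id n (rep_matrix g) < 1/2" if "g \<in> isotropy s t y" for g
      using T(3) y that unfolding N_def by blast
    then show "rep_trivial_at s t p R y" using y by (intro trivial_at_if_isotropy_near_id) auto
  qed (use T open_V x in auto)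
qed

end

lemma rep_trivialization_around:
  assumes "topological_groupoid s t u m i" "banach_bundle p add sm z nrm"
    and "locally_trivial_finite_rank p add sm" "groupoid_representation s t u m p add sm R"
  obtains V n h h' where "x \<in> V" "rep_trivialization s t u m i p add sm R V n h h'"
proof -
  obtain V n h h' where V: "open V" "x \<in> V" "homeomorphism (V \<times> euclid n) (p -` V) h h'"
    "\<forall>y\<in>V. \<forall>v\<in>euclid n. p (h (y, v)) = y"
    "\<forall>y\<in>V. \<forall>v\<in>euclid n. \<forall>w\<in>euclid n. \<forall>a b.
       h (y, \<lambda>j. a * v j + b * w j) = add (sm a (h (y, v))) (sm b (h (y, w)))"
    using assms(3)[unfolded locally_trivial_finite_rank_def, THEN spec[of _ x]] by (elim exE conjE) simp
  have "rep_trivialization s t u m i p add sm R V n h h'"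
  proof
    show "p (sm a e) = p e" for a e by (rule banach_bundle_scale_fiber[OF assms(2)])
  qed (use assms(1,4) V in simp_all)
  with V(2) show ?thesis by (rule that)
qed

lemma closed_rep_trivial_points:
  fixes s t :: "'g::t2_space \<Rightarrow> 'x::topological_space" and p :: "'e::t2_space \<Rightarrow> 'x"
  assumes "topological_groupoid s t u m i" "banach_bundle p add sm z nrm"
    and "locally_trivial_finite_rank p add sm" "groupoid_representation s t u m p add sm R"
    and sections: "isotropy_local_sections s t"
  shows "closed {x. rep_trivial_at s t p R x}"
  unfolding closure_subset_eq[symmetric]
proof
  fix x assume x: "x \<in> closure {x. rep_trivial_at s t p R x}"
  obtain V n h h' where xV: "x \<in> V" and triv: "rep_trivialization s t u m i p add sm R V n h h'"
    using rep_trivialization_around[OF assms(1-4)] by blast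
  from rep_trivialization.trivial_at_closure_point[OF triv xV sections x]
  show "x \<in> {x. rep_trivial_at s t p R x}" by simp
qed

lemma open_rep_trivial_points:
  fixes s t :: "'g::t2_space \<Rightarrow> 'x::topological_space" and p :: "'e::t2_space \<Rightarrow> 'x"
  assumes "topological_groupoid s t u m i" "banach_bundle p add sm z nrm"
    and "locally_trivial_finite_rank p add sm" "groupoid_representation s t u m p add sm R"
    and PA: "proper_anchor s t" and LC: "locally_compact_space (euclidean :: 'g topology)"
  shows "open {x. rep_trivial_at s t p R x}"
proof (subst open_subopen, intro ballI)
  fix x assume x: "x \<in> {x. rep_trivial_at s t p R x}"
  obtain V n h h' where "x \<in> V" and triv: "rep_trivialization s t u m i p add sm R V n h h'"
    using rep_trivialization_around[OF assms(1-4)] by blast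
  then obtain T where "open T" "x \<in> T" "\<And>y. y \<in> T \<Longrightarrow> rep_trivial_at s t p R y"
    using rep_trivialization.trivial_on_nhd[OF triv _ _ PA LC] x by blast
  then show "\<exists>T. open T \<and> x \<in> T \<and> T \<subseteq> {x. rep_trivial_at s t p R x}" by blast
qed

theorem mainTheorem16:
  fixes s t :: "'g::t2_space \<Rightarrow> 'x::topological_space"
    and u :: "'x \<Rightarrow> 'g" and m :: "'g \<Rightarrow> 'g \<Rightarrow> 'g" and i :: "'g \<Rightarrow> 'g"
    and p :: "'e::t2_space \<Rightarrow> 'x" and add :: "'e \<Rightarrow> 'e \<Rightarrow> 'e"
    and sm :: "real \<Rightarrow> 'e \<Rightarrow> 'e" and z :: "'x \<Rightarrow> 'e" and nrm :: "'e \<Rightarrow> real"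
    and R :: "'g \<Rightarrow> 'e \<Rightarrow> 'e" and x0 :: 'x
  assumes "locally_compact_groupoid s t u m i"
    and "proper_anchor s t"
    and "\<forall>x. lie_group (isotropy s t x) m i (u x)"
    and "isotropy_local_sections s t"
    and "connected (UNIV :: 'x set)"
    and "locally_connected_space (euclidean :: 'x topology)"
    and "banach_bundle p add sm z nrm"
    and "locally_trivial_finite_rank p add sm"
    and "groupoid_representation s t u m p add sm R"
    and "rep_trivial_at s t p R x0"
  shows "\<forall>x. rep_trivial_at s t p R x"
proof -
  have TG: "topological_groupoid s t u m i" and LC: "locally_compact_space (euclidean :: 'g topology)"
    using assms(1) unfolding locally_compact_groupoid_def by simp_all
  let ?S = "{x. rep_trivial_at s t p R x}"
  have "openin (top_of_set UNIV) ?S"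
    using open_rep_trivial_points[OF TG assms(7-9,2) LC] by (metis open_openin subtopology_UNIV)
  moreover have "closedin (top_of_set UNIV) ?S"
    using closed_rep_trivial_points[OF TG assms(7-9,4)] by (metis closed_closedin subtopology_UNIV)
  ultimately have "?S = {} \<or> ?S = UNIV"
    using assms(5)[unfolded connected_clopen] by blast
  moreover have "x0 \<in> ?S" using assms(10) by simp
  ultimately show ?thesis by blast
qed

end
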